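(* Let $M$ be a structure in a relational language with finitely many constant symbols, and $n\in\omega$. Suppose $\mathrm{Age}(M)$ is $(n+1)$-wqo. If $M^*$ is an expansion of $M$ by finitely many constants, then $\mathrm{Age}(M^* )$ is $n$-wqo.
   Context: $\mathrm{Age}(M)$ is the class of isomorphism types of finite substructures of $M$, quasi-ordered by embeddability; it is wqo if it contains no infinite antichain. $\mathrm{Age}(M)$ is $n$-wqo if $\mathrm{Age}(M')$ is wqo for every expansion $M'$ of $M$ by $n$ unary predicates partitioning the universe. *)

theory Defs
  imports Main
begin

record ('a, 'r, 'c) struc =
  univ :: "'a set"
  ar   :: "'r \<Rightarrow> nat"
  rel  :: "'r \<Rightarrow> 'a list \<Rightarrow> bool"
  cst  :: "'c \<Rightarrow> 'a"

definition struc_wf :: "('a, 'r, 'c) struc \<Rightarrow> bool" where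
  "struc_wf M \<longleftrightarrow> univ M \<noteq> {} \<and> (\<forall>c. cst M c \<in> univ M) \<and>
     (\<forall>r xs. rel M r xs \<longrightarrow> length xs = ar M r \<and> set xs \<subseteq> univ M)"

text \<open>Finite substructures: finite subsets of the universe closed under the constants
  (the language is relational, so these are exactly the substructures).\<close>

definition fin_sub :: "('a, 'r, 'c) struc \<Rightarrow> 'a set \<Rightarrow> bool" where
  "fin_sub M A \<longleftrightarrow> finite A \<and> A \<subseteq> univ M \<and> range (cst M) \<subseteq> A"

definition embeds :: "('a, 'r, 'c) struc \<Rightarrow> 'a set \<Rightarrow> ('b, 'r, 'c) struc \<Rightarrow> 'b set \<Rightarrow> bool" where
  "embeds M A N B \<longleftrightarrow> (\<exists>f. inj_on f A \<and> f ` A \<subseteq> B \<and> (\<forall>c. f (cst M c) = cst N c) \<and>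
     (\<forall>r xs. set xs \<subseteq> A \<longrightarrow> length xs = ar M r \<longrightarrow> (rel M r xs \<longleftrightarrow> rel N r (map f xs))))"

definition age_wqo :: "('a, 'r, 'c) struc \<Rightarrow> bool" where
  "age_wqo M \<longleftrightarrow> \<not> (\<exists>A :: nat \<Rightarrow> 'a set. (\<forall>i. fin_sub M (A i)) \<and>
      (\<forall>i j. i \<noteq> j \<longrightarrow> \<not> embeds M (A i) M (A j)))"

text \<open>Expansion of M by n unary predicates P_0,...,P_(n-1) given by a colouring col:
  P_i = {x in the universe. col x = i}.\<close>

definition colour_exp :: "('a, 'r, 'c) struc \<Rightarrow> nat \<Rightarrow> ('a \<Rightarrow> nat) \<Rightarrow> ('a, 'r + nat, 'c) struc" where
  "colour_exp M n col = \<lparr> univ = univ M,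
     ar = (\<lambda>s. case s of Inl r \<Rightarrow> ar M r | Inr i \<Rightarrow> 1),
     rel = (\<lambda>s xs. case s of Inl r \<Rightarrow> rel M r xs
                 | Inr i \<Rightarrow> i < n \<and> (\<exists>x. xs = [x] \<and> x \<in> univ M \<and> col x = i)),
     cst = cst M \<rparr>"

definition n_wqo :: "('a, 'r, 'c) struc \<Rightarrow> nat \<Rightarrow> bool" where
  "n_wqo M n \<longleftrightarrow> (\<forall>col. (\<forall>x \<in> univ M. col x < n) \<longrightarrow> age_wqo (colour_exp M n col))"

definition const_exp :: "('a, 'r, 'c) struc \<Rightarrow> ('d \<Rightarrow> 'a) \<Rightarrow> ('a, 'r, 'c + 'd) struc" where
  "const_exp M d = \<lparr> univ = univ M, ar = ar M, rel = rel M,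
     cst = (\<lambda>s. case s of Inl c \<Rightarrow> cst M c | Inr e \<Rightarrow> d e) \<rparr>"

end

theory Submission
  imports Defs "HOL-Library.FuncSet" "HOL-Library.Ramsey"
begin

(*
  Give the new constants an extra colour n. An antichain in the age of the n-coloured
  expansion by constants is then a sequence in the age of the (n+1)-coloured M whose
  members all contain the constants. By Ramsey's theorem and the (n+1)-wqo hypothesis,
  a subsequence is a chain of embeddings, forwards or backwards. Embeddings preserve
  colour n, so each of them permutes the finitely many constants; by pigeonhole two
  composites along the chain induce the same permutation, and cancelling yields an
  embedding between two members that fixes every constant, i.e. an embedding of the
  expansions, contradicting the antichain.
*)

lemma ramsey_chain_or_antichain:
  fixes R :: "nat \<Rightarrow> nat \<Rightarrow> bool"
  obtains (chain) s :: "nat \<Rightarrow> nat" where "strict_mono s" "\<And>k l. k < l \<Longrightarrow> R (s k) (s l)"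
  | (reverse_chain) s :: "nat \<Rightarrow> nat" where "strict_mono s" "\<And>k l. k < l \<Longrightarrow> R (s l) (s k)"
  | (antichain) s :: "nat \<Rightarrow> nat" where "strict_mono s" "\<And>k l. k \<noteq> l \<Longrightarrow> \<not> R (s k) (s l)"
proof -
  define colour where "colour X =
    (if R (Min X) (Max X) then 0 else if R (Max X) (Min X) then 1 else 2::nat)" for X
  have "\<forall>x\<in>UNIV. \<forall>y\<in>UNIV. x \<noteq> y \<longrightarrow> colour {x, y} < 3"
    by (simp add: colour_def)
  from Ramsey2[OF infinite_UNIV_nat this] obtain Y t where Y: "infinite Y" and t: "t < 3"
    and hom: "\<forall>x\<in>Y. \<forall>y\<in>Y. x \<noteq> y \<longrightarrow> colour {x, y} = t"
    by blast
  define s where "s = enumerate Y"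
  have s_mono: "strict_mono s"
    using Y by (simp add: s_def strict_mono_def enumerate_mono)
  have s_colour: "(if R (s k) (s l) then 0 else if R (s l) (s k) then 1 else 2::nat) = t"
    if "k < l" for k l
  proof -
    have "s k < s l" using s_mono that by (rule strict_monoD)
    moreover have "s k \<in> Y" "s l \<in> Y" using Y by (simp_all add: s_def enumerate_in_set)
    ultimately have "colour {s k, s l} = t" using hom by simp
    moreover have "Min {s k, s l} = s k" "Max {s k, s l} = s l" using \<open>s k < s l\<close> by auto
    ultimately show ?thesis unfolding colour_def by (simp only:)
  qed
  consider "t = 0" | "t = 1" | "t = 2" using t by linarith
  then show thesis
  proof cases
    case 1
    then show thesis using chain[OF s_mono] s_colour by (fastforce split: if_splits)
  next
    case 2
    then show thesis using reverse_chain[OF s_mono] s_colour by (fastforce split: if_splits)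
  next
    case 3
    have "\<not> R (s k) (s l)" if "k \<noteq> l" for k l
      using that s_colour[of k l] s_colour[of l k] 3 by (cases "k < l") (auto split: if_splits)
    then show thesis using antichain[OF s_mono] by blast
  qed
qed

text \<open>Arrows are composed in diagrammatic order: \<open>op f g\<close> is \<open>f\<close> followed by \<open>g\<close>.\<close>

lemma composite_pigeonhole:
  fixes op :: "'f \<Rightarrow> 'f \<Rightarrow> 'f" and Arr :: "'x \<Rightarrow> 'x \<Rightarrow> 'f \<Rightarrow> bool"
    and B :: "nat \<Rightarrow> 'x" and \<rho> :: "'f \<Rightarrow> 'p"
  assumes assoc: "\<And>a b c. op (op a b) c = op a (op b c)"
    and right_unit: "\<And>a. op a e = a"
    and Arr_unit: "\<And>X. Arr X X e"
    and Arr_op: "\<And>X Y Z f g. Arr X Y f \<Longrightarrow> Arr Y Z g \<Longrightarrow> Arr X Z (op f g)"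
    and steps: "\<And>k. \<exists>f. Arr (B k) (B (Suc k)) f"
    and "finite S" and \<rho>_in_S: "\<And>k f. Arr (B 0) (B k) f \<Longrightarrow> \<rho> f \<in> S"
  obtains k l f g where "k < l" "Arr (B 0) (B k) f" "Arr (B k) (B l) g" "\<rho> (op f g) = \<rho> f"
proof -
  obtain F where F: "\<And>k. Arr (B k) (B (Suc k)) (F k)" using steps by metis
  define path where "path k m = rec_nat e (\<lambda>i p. op p (F (k + i))) m" for k m
  have path_0: "path k 0 = e" and path_Suc: "path k (Suc m) = op (path k m) (F (k + m))" for k m
    by (simp_all add: path_def)
  have Arr_path: "Arr (B k) (B (k + m)) (path k m)" for k m
  proof (induction m)
    case 0
    show ?case by (simp add: path_0 Arr_unit)
  next
    case (Suc m)
    show ?case using Arr_op[OF Suc.IH F] by (simp add: path_Suc)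
  qed
  have path_add: "path k (m + m') = op (path k m) (path (k + m) m')" for k m m'
    by (induction m') (simp_all add: path_0 path_Suc right_unit assoc add.assoc)
  have "\<not> inj (\<lambda>k. \<rho> (path 0 k))"
  proof
    assume "inj (\<lambda>k. \<rho> (path 0 k))"
    then have "infinite (range (\<lambda>k. \<rho> (path 0 k)))"
      using finite_imageD infinite_UNIV_nat by blast
    moreover have "range (\<lambda>k. \<rho> (path 0 k)) \<subseteq> S"
      using \<rho>_in_S Arr_path[of 0] by auto
    ultimately show False using \<open>finite S\<close> finite_subset by blast
  qed
  then obtain k l where "k < l" and repeat: "\<rho> (path 0 k) = \<rho> (path 0 l)"
    unfolding inj_def by (metis linorder_neqE_nat)
  then have "\<rho> (op (path 0 k) (path k (l - k))) = \<rho> (path 0 k)"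
    using path_add[of 0 k "l - k"] by simp
  with \<open>k < l\<close> show thesis
    using that Arr_path[of 0 k] Arr_path[of k "l - k"] by simp
qed

definition embedding_on ::
    "('a, 'r, 'c) struc \<Rightarrow> 'a set \<Rightarrow> ('b, 'r, 'c) struc \<Rightarrow> 'b set \<Rightarrow> ('a \<Rightarrow> 'b) \<Rightarrow> bool" where
  "embedding_on M A N B f \<longleftrightarrow> inj_on f A \<and> f ` A \<subseteq> B \<and> (\<forall>c. f (cst M c) = cst N c) \<and>
     (\<forall>r xs. set xs \<subseteq> A \<longrightarrow> length xs = ar M r \<longrightarrow> (rel M r xs \<longleftrightarrow> rel N r (map f xs)))"

lemma embeds_iff_embedding_on: "embeds M A N B \<longleftrightarrow> (\<exists>f. embedding_on M A N B f)"
  by (simp add: embeds_def embedding_on_def)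

lemma embedding_on_relD:
  "embedding_on M A N B f \<Longrightarrow> set xs \<subseteq> A \<Longrightarrow> length xs = ar M r \<Longrightarrow>
    rel M r xs \<longleftrightarrow> rel N r (map f xs)"
  by (simp add: embedding_on_def)

lemma embedding_on_id: "embedding_on M A M A id"
  by (simp add: embedding_on_def)

lemma embedding_on_comp:
  assumes f: "embedding_on M A M B f" and g: "embedding_on M B M C g"
  shows "embedding_on M A M C (g \<circ> f)"
  unfolding embedding_on_def
proof (intro conjI allI impI)
  have "inj_on f A" "f ` A \<subseteq> B" "inj_on g B" "g ` B \<subseteq> C"
    using f g by (simp_all add: embedding_on_def)
  then show "inj_on (g \<circ> f) A" "(g \<circ> f) ` A \<subseteq> C"
    by (auto intro: comp_inj_on inj_on_subset[of g B])
  show "(g \<circ> f) (cst M c) = cst M c" for c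
    using f g by (simp add: embedding_on_def)
  fix r xs assume xs: "set xs \<subseteq> A" "length xs = ar M r"
  have "set (map f xs) \<subseteq> B" using f xs(1) by (auto simp: embedding_on_def)
  then have "rel M r (map f xs) \<longleftrightarrow> rel M r (map g (map f xs))"
    using embedding_on_relD[OF g] xs(2) by simp
  then show "rel M r xs \<longleftrightarrow> rel M r (map (g \<circ> f) xs)"
    using embedding_on_relD[OF f xs] by simp
qed

lemma const_exp_simps [simp]:
  "univ (const_exp M d) = univ M" "ar (const_exp M d) = ar M" "rel (const_exp M d) = rel M"
  "cst (const_exp M d) = case_sum (cst M) d"
  by (simp_all add: const_exp_def)

lemma colour_exp_simps [simp]:
  "univ (colour_exp M n col) = univ M" "cst (colour_exp M n col) = cst M"
  "ar (colour_exp M n col) = case_sum (ar M) (\<lambda>_. 1)"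
  "rel (colour_exp M n col) (Inl r) = rel M r"
  "rel (colour_exp M n col) (Inr i) xs \<longleftrightarrow> i < n \<and> (\<exists>x. xs = [x] \<and> x \<in> univ M \<and> col x = i)"
  by (simp_all add: colour_exp_def fun_eq_iff split: sum.split)

locale constant_marking =
  fixes M :: "('a, 'r, 'c) struc" and d :: "'d::finite \<Rightarrow> 'a" and n :: nat and col :: "'a \<Rightarrow> nat"
  assumes consts_in_univ: "d e \<in> univ M"
    and col_less: "x \<in> univ M \<Longrightarrow> col x < n"
begin

definition coloured :: "('a, 'r + nat, 'c + 'd) struc" where
  "coloured = colour_exp (const_exp M d) n col"

definition marked :: "('a, 'r + nat, 'c) struc" where
  "marked = colour_exp M (Suc n) (\<lambda>x. if x \<in> range d then n else col x)"

lemma age_wqo_marked: "n_wqo M (Suc n) \<Longrightarrow> age_wqo marked"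
  using col_less unfolding n_wqo_def marked_def by (simp add: less_Suc_eq)

lemma fin_sub_coloured_D:
  assumes "fin_sub coloured A"
  shows "fin_sub marked A" "range d \<subseteq> A"
proof -
  have "cst M c \<in> A" "d e \<in> A" for c e
    using assms rangeI[of "cst coloured" "Inl c"] rangeI[of "cst coloured" "Inr e"]
    by (auto simp: fin_sub_def coloured_def)
  then show "fin_sub marked A" "range d \<subseteq> A"
    using assms by (auto simp: fin_sub_def coloured_def marked_def)
qed

lemma embedding_on_marked_permutes_consts:
  assumes f: "embedding_on marked X marked Y f" and "range d \<subseteq> X"
  shows "f ` range d = range d"
proof (rule endo_inj_surj)
  show "inj_on f (range d)"
    using f \<open>range d \<subseteq> X\<close> unfolding embedding_on_def by (meson inj_on_subset)
  show "f ` range d \<subseteq> range d"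
  proof clarify
    fix e
    have "rel marked (Inr n) (map f [d e])"
      using embedding_on_relD[OF f, of "[d e]" "Inr n"] assms(2) consts_in_univ
      by (simp add: marked_def image_subset_iff)
    then have "rel marked (Inr n) [f (d e)]" by simp
    then show "f (d e) \<in> range d"
      using col_less by (auto simp: marked_def split: if_splits)
  qed
qed simp

lemma rel_coloured_eq_marked_outside_consts:
  assumes "x \<notin> range d"
  shows "rel coloured s [x] \<longleftrightarrow> rel marked s [x]"
  using assms col_less
  by (cases s) (auto simp: coloured_def marked_def less_Suc_eq)

lemma embedding_on_coloured_if_fixes_consts:
  assumes f: "embedding_on marked X marked Y f" and "range d \<subseteq> X"
    and fixed: "\<And>x. x \<in> range d \<Longrightarrow> f x = x"
  shows "embedding_on coloured X coloured Y f"
  unfolding embedding_on_def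
proof (intro conjI allI impI)
  show "inj_on f X" "f ` X \<subseteq> Y" using f by (simp_all add: embedding_on_def)
  show "f (cst coloured c) = cst coloured c" for c
    using f fixed by (auto simp: embedding_on_def coloured_def marked_def split: sum.split)
  fix s xs assume xs: "set xs \<subseteq> X" "length xs = ar coloured s"
  show "rel coloured s xs \<longleftrightarrow> rel coloured s (map f xs)"
  proof (cases s)
    case (Inl r)
    then show ?thesis
      using embedding_on_relD[OF f xs(1), of "Inl r"] xs(2) by (simp add: coloured_def marked_def)
  next
    case (Inr i)
    with xs obtain x where x: "xs = [x]" "x \<in> X" by (auto simp: coloured_def length_Suc_conv)
    show ?thesis
    proof (cases "x \<in> range d")
      case True
      then show ?thesis using fixed x by simp
    next
      case False
      have "f x \<notin> range d"
      proof
        assume "f x \<in> range d"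
        then have "f (f x) = f x" "f x \<in> X" using fixed \<open>range d \<subseteq> X\<close> by auto
        then have "f x = x" using f x by (auto simp: embedding_on_def dest: inj_onD)
        with False \<open>f x \<in> range d\<close> show False by simp
      qed
      moreover have "rel marked s [x] \<longleftrightarrow> rel marked s [f x]"
        using embedding_on_relD[OF f, of "[x]" s] x Inr by (simp add: marked_def)
      ultimately show ?thesis
        using False x by (simp add: rel_coloured_eq_marked_outside_consts)
    qed
  qed
qed

lemma coloured_embedding_of_chain:
  assumes sub: "\<And>k. fin_sub coloured (B k)"
    and steps: "\<And>k. embeds marked (B k) marked (B (Suc k))"
  obtains k l where "k < l" "embeds coloured (B k) coloured (B l)"
proof -
  have consts_in: "range d \<subseteq> B k" for k
    using fin_sub_coloured_D(2)[OF sub] .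
  obtain k l f g where "k < l"
    and f: "embedding_on marked (B 0) marked (B k) f"
    and g: "embedding_on marked (B k) marked (B l) g"
    and same: "restrict (g \<circ> f) (range d) = restrict f (range d)"
  proof (rule composite_pigeonhole[where op = "\<lambda>f g. g \<circ> f" and e = id and B = B
        and Arr = "\<lambda>X Y. embedding_on marked X marked Y" and S = "range d \<rightarrow>\<^sub>E range d"
        and \<rho> = "\<lambda>f. restrict f (range d)"])
    show "restrict f (range d) \<in> range d \<rightarrow>\<^sub>E range d"
      if "embedding_on marked (B 0) marked (B k) f" for k f
      using embedding_on_marked_permutes_consts[OF that consts_in] by auto
  qed (use steps in \<open>auto simp: embeds_iff_embedding_on embedding_on_id embedding_on_comp
        comp_assoc finite_PiE\<close>)
  have "g x = x" if "x \<in> range d" for x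
  proof -
    obtain y where "y \<in> range d" "x = f y"
      using embedding_on_marked_permutes_consts[OF f consts_in] \<open>x \<in> range d\<close> by blast
    then show ?thesis using fun_cong[OF same, of y] by simp
  qed
  then have "embedding_on coloured (B k) coloured (B l) g"
    using embedding_on_coloured_if_fixes_consts[OF g consts_in] by blast
  with \<open>k < l\<close> show thesis using that embeds_iff_embedding_on by blast
qed

lemma coloured_embedding_of_reverse_chain:
  assumes sub: "\<And>k. fin_sub coloured (B k)"
    and steps: "\<And>k. embeds marked (B (Suc k)) marked (B k)"
  obtains k l where "k < l" "embeds coloured (B l) coloured (B k)"
proof -
  have consts_in: "range d \<subseteq> B k" for k
    using fin_sub_coloured_D(2)[OF sub] .
  obtain k l f g where "k < l"
    and f: "embedding_on marked (B k) marked (B 0) f"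
    and g: "embedding_on marked (B l) marked (B k) g"
    and same: "restrict (f \<circ> g) (range d) = restrict f (range d)"
  proof (rule composite_pigeonhole[where op = "(\<circ>)" and e = id and B = B
        and Arr = "\<lambda>X Y. embedding_on marked Y marked X" and S = "range d \<rightarrow>\<^sub>E range d"
        and \<rho> = "\<lambda>f. restrict f (range d)"])
    show "restrict f (range d) \<in> range d \<rightarrow>\<^sub>E range d"
      if "embedding_on marked (B k) marked (B 0) f" for k f
      using embedding_on_marked_permutes_consts[OF that consts_in] by auto
  qed (use steps in \<open>auto simp: embeds_iff_embedding_on embedding_on_id embedding_on_comp
        comp_assoc finite_PiE\<close>)
  have "g x = x" if "x \<in> range d" for x
  proof -
    have "g x \<in> range d"
      using embedding_on_marked_permutes_consts[OF g consts_in] \<open>x \<in> range d\<close> by blast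
    moreover have "f (g x) = f x" using fun_cong[OF same, of x] \<open>x \<in> range d\<close> by simp
    moreover have "inj_on f (range d)"
      using f consts_in unfolding embedding_on_def by (meson inj_on_subset)
    ultimately show ?thesis using \<open>x \<in> range d\<close> by (meson inj_onD)
  qed
  then have "embedding_on coloured (B l) coloured (B k) g"
    using embedding_on_coloured_if_fixes_consts[OF g consts_in] by blast
  with \<open>k < l\<close> show thesis using that embeds_iff_embedding_on by blast
qed

lemma age_wqo_coloured:
  assumes "age_wqo marked"
  shows "age_wqo coloured"
proof (rule ccontr)
  assume "\<not> age_wqo coloured"
  then obtain A :: "nat \<Rightarrow> 'a set" where sub: "\<And>i. fin_sub coloured (A i)"
    and anti: "\<And>i j. i \<noteq> j \<Longrightarrow> \<not> embeds coloured (A i) coloured (A j)"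
    unfolding age_wqo_def by blast
  show False
  proof (cases rule: ramsey_chain_or_antichain[of "\<lambda>i j. embeds marked (A i) marked (A j)"])
    case (chain s)
    obtain k l where "k < l" "embeds coloured (A (s k)) coloured (A (s l))"
      by (rule coloured_embedding_of_chain[of "A \<circ> s"]) (use sub chain(2) in auto)
    moreover have "s k \<noteq> s l" using strict_monoD[OF chain(1) \<open>k < l\<close>] by simp
    ultimately show False using anti by blast
  next
    case (reverse_chain s)
    obtain k l where "k < l" "embeds coloured (A (s l)) coloured (A (s k))"
      by (rule coloured_embedding_of_reverse_chain[of "A \<circ> s"]) (use sub reverse_chain(2) in auto)
    moreover have "s l \<noteq> s k" using strict_monoD[OF reverse_chain(1) \<open>k < l\<close>] by simp
    ultimately show False using anti by blast
  next
    case (antichain s)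
    have "fin_sub marked (A (s i))" for i
      using fin_sub_coloured_D(1)[OF sub] .
    with antichain(2) have "\<exists>B :: nat \<Rightarrow> 'a set. (\<forall>i. fin_sub marked (B i)) \<and>
        (\<forall>i j. i \<noteq> j \<longrightarrow> \<not> embeds marked (B i) marked (B j))"
      by (intro exI[of _ "A \<circ> s"]) auto
    with assms show False unfolding age_wqo_def by blast
  qed
qed

end

theorem lemma5:
  fixes M :: "('a, 'r, 'c) struc" and d :: "'d::finite \<Rightarrow> 'a" and n :: nat
  assumes "finite (UNIV :: 'c set)"
    and "struc_wf M"
    and "n_wqo M (Suc n)"
    and "\<forall>e. d e \<in> univ M"
  shows "n_wqo (const_exp M d) n"
  unfolding n_wqo_def
proof (intro allI impI)
  fix col
  assume "\<forall>x\<in>univ (const_exp M d). col x < n"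
  then interpret constant_marking M d n col
    using assms(4) by unfold_locales auto
  show "age_wqo (colour_exp (const_exp M d) n col)"
    using age_wqo_coloured age_wqo_marked assms(3) unfolding coloured_def by blast
qed

end
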